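(* Let $f:\mathbb Z^m\to\mathbb R^N$ be a discrete isothermic net, let $s:\mathbb Z^m\to\mathbb R\setminus\{0\}$ satisfy $l(M,f_{ij})/l(M,f)=s_{ij}/s$ and $l(M,f_j)/l(M,f_i)=s_j/s_i$ for every elementary quadrilateral $(f,f_i,f_{ij},f_j)$ with diagonal intersection $M$, and define the edge labelling $\alpha_i$ by $|f_i-f|^2=\alpha_i s s_i$. Then for every $u$ and $i\ne j$, $q(f,f_i,f_{ij},f_j)=\alpha_i/\alpha_j$.
   Context: Notation: for $f:\mathbb Z^m\to\mathbb R^N$, $f=f(u)$, $f_i=f(u+e_i)$, $f_{ij}=f(u+e_i+e_j)$ with $e_i$ the unit vectors, similarly for $s$. A Q-net is a map such that each elementary quadrilateral $(f,f_i,f_{ij},f_j)$ ($i\ne j$) is planar, assumed non-degenerate (distinct vertices, no three collinear, diagonals meeting in a point $M$ distinct from the vertices). Two planar quadrilaterals $(A,B,C,D)$, $(A^*,B^*,C^*,D^* )$ are dual if $A^*B^*\parallel AB$, $B^*C^*\parallel BC$, $C^*D^*\parallel CD$, $D^*A^*\parallel DA$, $A^*C^*\parallel BD$, $B^*D^*\parallel AC$. A Q-net $f$ is a discrete Koenigs net if there is a Q-net $f^*$ with every $(f^*,f^*_i,f^*_{ij},f^*_j)$ dual to $(f,f_i,f_{ij},f_j)$. A circular net is a Q-net all of whose elementary quadrilaterals have their four vertices on a circle. A discrete isothermic net is a circular net which is a discrete Koenigs net. For collinear points $P,Q$, $l(P,Q)$ is the directed (signed) length along their line. For four concircular points $a,b,c,d\in\mathbb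 R^N$, $q(a,b,c,d)=(a-b)(b-c)^{-1}(c-d)(d-a)^{-1}$, computed after identifying a $2$-plane containing them with $\mathbb C$; it is real. (Such $s$ exists and the $\alpha_i$ so defined form an edge labelling: real functions on edges parallel to the $i$-th axis taking equal values on opposite edges of every elementary square.) *)

theory Defs
  imports "HOL-Analysis.Analysis"
begin

definition ev :: "'m::finite \<Rightarrow> int ^ 'm" where
  "ev i = axis i 1"

definition nondeg_quad :: "'a::euclidean_space \<Rightarrow> 'a \<Rightarrow> 'a \<Rightarrow> 'a \<Rightarrow> bool" where
  "nondeg_quad A B C D \<longleftrightarrow> distinct [A, B, C, D]
     \<and> \<not> collinear {A, B, C} \<and> \<not> collinear {A, B, D}
     \<and> \<not> collinear {A, C, D} \<and> \<not> collinear {B, C, D}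
     \<and> (\<exists>M. M \<in> affine hull {A, C} \<and> M \<in> affine hull {B, D} \<and> M \<notin> {A, B, C, D})"

definition planar_quad :: "'a::euclidean_space \<Rightarrow> 'a \<Rightarrow> 'a \<Rightarrow> 'a \<Rightarrow> bool" where
  "planar_quad A B C D \<longleftrightarrow> coplanar {A, B, C, D}"

definition Q_net :: "(int ^ 'm::finite \<Rightarrow> real ^ 'n::finite) \<Rightarrow> bool" where
  "Q_net f \<longleftrightarrow> (\<forall>u i j. i \<noteq> j \<longrightarrow>
     planar_quad (f u) (f (u + ev i)) (f (u + ev i + ev j)) (f (u + ev j))
     \<and> nondeg_quad (f u) (f (u + ev i)) (f (u + ev i + ev j)) (f (u + ev j)))"

definition parallel_vec :: "'a::real_vector \<Rightarrow> 'a \<Rightarrow> bool" where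
  "parallel_vec v w \<longleftrightarrow> (\<exists>c. c \<noteq> 0 \<and> v = c *\<^sub>R w)"

definition dual_quad :: "'a::euclidean_space \<Rightarrow> 'a \<Rightarrow> 'a \<Rightarrow> 'a \<Rightarrow> 'a \<Rightarrow> 'a \<Rightarrow> 'a \<Rightarrow> 'a \<Rightarrow> bool" where
  "dual_quad A B C D A' B' C' D' \<longleftrightarrow>
     parallel_vec (B' - A') (B - A) \<and> parallel_vec (C' - B') (C - B)
   \<and> parallel_vec (D' - C') (D - C) \<and> parallel_vec (A' - D') (A - D)
   \<and> parallel_vec (C' - A') (D - B) \<and> parallel_vec (D' - B') (C - A)"

definition koenigs_net :: "(int ^ 'm::finite \<Rightarrow> real ^ 'n::finite) \<Rightarrow> bool" where
  "koenigs_net f \<longleftrightarrow> Q_net f \<and> (\<exists>fs :: int ^ 'm \<Rightarrow> real ^ 'n. Q_net fs \<and>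
     (\<forall>u i j. i \<noteq> j \<longrightarrow>
        dual_quad (fs u) (fs (u + ev i)) (fs (u + ev i + ev j)) (fs (u + ev j))
                  (f u) (f (u + ev i)) (f (u + ev i + ev j)) (f (u + ev j))))"

definition concircular :: "'a::euclidean_space \<Rightarrow> 'a \<Rightarrow> 'a \<Rightarrow> 'a \<Rightarrow> bool" where
  "concircular a b c d \<longleftrightarrow> (\<exists>z r. r > 0 \<and> coplanar {z, a, b, c, d}
     \<and> dist z a = r \<and> dist z b = r \<and> dist z c = r \<and> dist z d = r)"

definition circular_net :: "(int ^ 'm::finite \<Rightarrow> real ^ 'n::finite) \<Rightarrow> bool" where
  "circular_net f \<longleftrightarrow> Q_net f \<and> (\<forall>u i j. i \<noteq> j \<longrightarrow>
     concircular (f u) (f (u + ev i)) (f (u + ev i + ev j)) (f (u + ev j)))"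

definition isothermic_net :: "(int ^ 'm::finite \<Rightarrow> real ^ 'n::finite) \<Rightarrow> bool" where
  "isothermic_net f \<longleftrightarrow> circular_net f \<and> koenigs_net f"

text \<open>Directed length from P to Q along a line with unit direction vector d.\<close>
definition dlen :: "'a::real_inner \<Rightarrow> 'a \<Rightarrow> 'a \<Rightarrow> real" where
  "dlen d P Q = (Q - P) \<bullet> d"

text \<open>Complex cross-ratio and its transfer to R^N via an isometric identification of a
2-plane containing the points with C.\<close>
definition cross_ratio :: "complex \<Rightarrow> complex \<Rightarrow> complex \<Rightarrow> complex \<Rightarrow> complex" where
  "cross_ratio a b c d = (a - b) * inverse (b - c) * (c - d) * inverse (d - a)"

definition plane_emb :: "'a::real_inner \<Rightarrow> 'a \<Rightarrow> 'a \<Rightarrow> complex \<Rightarrow> 'a" where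
  "plane_emb p e1 e2 z = p + Re z *\<^sub>R e1 + Im z *\<^sub>R e2"

definition qcr :: "'a::real_inner \<Rightarrow> 'a \<Rightarrow> 'a \<Rightarrow> 'a \<Rightarrow> complex" where
  "qcr a b c d = (SOME w. \<exists>p e1 e2 za zb zc zd.
      e1 \<bullet> e1 = 1 \<and> e2 \<bullet> e2 = 1 \<and> e1 \<bullet> e2 = 0
    \<and> plane_emb p e1 e2 za = a \<and> plane_emb p e1 e2 zb = b
    \<and> plane_emb p e1 e2 zc = c \<and> plane_emb p e1 e2 zd = d
    \<and> w = cross_ratio za zb zc zd)"

end

theory Submission
  imports Defs
begin

(*
  Put A = f, B = f_i, C = f_ij, D = f_j and let M be the intersection of the
  diagonals, M = A + t (C - A) = B + v (D - B).
  (1) Since the four points lie on a circle, the intersecting-chords theorem (power of M)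
      gives t (1 - t) |C - A|^2 = v (1 - v) |D - B|^2.
  (2) In complex coordinates of the plane of the quadrilateral this identity makes the
      cross-ratio real, namely  q(A,B,C,D) = -(1 - v) |B - A|^2 / (v |D - A|^2).
      Since qcr is defined by a choice over all isometric identifications of a plane with C,
      we show that every identification yields this value and that one exists.
  (3) The hypothesis on s along the diagonal BD says s_j / s_i = -(1 - v) / v, and the
      definition of alpha turns |B - A|^2 / |D - A|^2 into (alpha_i s_i) / (alpha_j s_j).
  Combining (2) and (3) gives q = alpha_i / alpha_j.
*)

section \<open>A cross-ratio identity in the complex plane\<close>

lemma cross_ratio_alt: "cross_ratio a b c d = (a - b) * (c - d) / ((b - c) * (d - a))"
  by (simp add: cross_ratio_def divide_inverse mult_ac)

text \<open>Complex form of step (2): the vertices are written through the diagonal vectors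
  P = C - A, Q = D - B and the parameters t, v of their intersection point.\<close>

lemma cross_ratio_intersecting_diagonals:
  fixes za P Q :: complex and t v :: real
  assumes chords: "t * (1-t) * (cmod P)^2 = v * (1-v) * (cmod Q)^2"
    and v0: "v \<noteq> 0"
    and BC: "(of_real t - 1) * P - of_real v * Q \<noteq> 0"
    and DA: "of_real t * P + (1 - of_real v) * Q \<noteq> 0"
  shows "cross_ratio za (za + of_real t * P - of_real v * Q) (za + P)
           (za + of_real t * P - of_real v * Q + Q)
     = of_real (-(1-v) * (cmod (of_real t * P - of_real v * Q))^2
                  / (v * (cmod (of_real t * P + (1 - of_real v) * Q))^2))"
proof -
  define T where "T = (of_real t :: complex)"
  define V where "V = (of_real v :: complex)"
  define X where "X = T * P + (1-V) * Q"
  define Y where "Y = T * P - V * Q"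
  have cX: "cnj X = T * cnj P + (1-V) * cnj Q" by (simp add: X_def T_def V_def)
  have cY: "cnj Y = T * cnj P - V * cnj Q" by (simp add: Y_def T_def V_def)
  have chords': "T * (1-T) * (P * cnj P) = V * (1-V) * (Q * cnj Q)"
  proof -
    have "of_real (t * (1-t) * (cmod P)^2) = (of_real (v * (1-v) * (cmod Q)^2) :: complex)"
      using chords by simp
    thus ?thesis unfolding T_def V_def of_real_mult complex_norm_square by simp
  qed
  have X0: "X \<noteq> 0" using DA by (simp add: X_def T_def V_def)
  have V0: "V \<noteq> 0" using v0 by (simp add: V_def)
  text \<open>Cross-multiplied form; the difference of both sides is a multiple of the chord identity.\<close>
  have cross_mult: "Y * ((T-1) * P + (1-V) * Q) * (V * (X * cnj X))
      = -(1-V) * (Y * cnj Y) * (((T-1) * P - V * Q) * X)"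
  proof -
    have "Y * ((T-1) * P + (1-V) * Q) * (V * (X * cnj X))
            - (-(1-V) * (Y * cnj Y) * (((T-1) * P - V * Q) * X))
       = -Y * X * (T * (1-T) * (P * cnj P) - V * (1-V) * (Q * cnj Q))"
      unfolding cX cY unfolding X_def Y_def by algebra
    thus ?thesis using chords' by simp
  qed
  have diffs: "za - (za + T * P - V * Q) = -Y" "(za + T * P - V * Q) - (za + P) = (T-1) * P - V * Q"
      "(za + P) - (za + T * P - V * Q + Q) = -((T-1) * P + (1-V) * Q)"
      "(za + T * P - V * Q + Q) - za = X"
    by (simp_all add: X_def Y_def algebra_simps)
  have "cross_ratio za (za + T * P - V * Q) (za + P) (za + T * P - V * Q + Q)
      = (Y * ((T-1) * P + (1-V) * Q)) / (((T-1) * P - V * Q) * X)"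
    unfolding cross_ratio_alt diffs mult_minus_left mult_minus_right minus_minus ..
  also have "\<dots> = -(1-V) * (Y * cnj Y) / (V * (X * cnj X))"
    using cross_mult BC X0 V0 unfolding T_def V_def by (subst frac_eq_eq) auto
  also have "\<dots> = of_real (-(1-v) * (cmod Y)^2 / (v * (cmod X)^2))"
    by (simp add: complex_norm_square[symmetric] V_def)
  finally show ?thesis unfolding T_def V_def X_def Y_def .
qed

section \<open>Isometric identifications of a plane with the complex numbers\<close>

definition plane_lin :: "'a::real_inner \<Rightarrow> 'a \<Rightarrow> complex \<Rightarrow> 'a" where
  "plane_lin e1 e2 z = Re z *\<^sub>R e1 + Im z *\<^sub>R e2"

lemma plane_emb_lin: "plane_emb p e1 e2 z = p + plane_lin e1 e2 z"
  by (simp add: plane_emb_def plane_lin_def)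

lemma plane_lin_diff: "plane_lin e1 e2 (z - w) = plane_lin e1 e2 z - plane_lin e1 e2 w"
  by (simp add: plane_lin_def algebra_simps)

lemma plane_lin_add: "plane_lin e1 e2 (z + w) = plane_lin e1 e2 z + plane_lin e1 e2 w"
  by (simp add: plane_lin_def algebra_simps)

lemma plane_lin_scale: "plane_lin e1 e2 (of_real c * z) = c *\<^sub>R plane_lin e1 e2 z"
  by (simp add: plane_lin_def algebra_simps)

lemma plane_lin_norm:
  assumes "e1 \<bullet> e1 = 1" "e2 \<bullet> e2 = 1" "e1 \<bullet> e2 = 0"
  shows "norm (plane_lin e1 e2 z) = cmod z"
proof -
  have "(norm (plane_lin e1 e2 z))^2 = plane_lin e1 e2 z \<bullet> plane_lin e1 e2 z"
    by (simp add: power2_norm_eq_inner)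
  also have "\<dots> = (Re z)^2 + (Im z)^2"
    using assms by (simp add: plane_lin_def inner_add_left inner_add_right inner_commute
        power2_eq_square)
  also have "\<dots> = (cmod z)^2" by (simp add: cmod_power2)
  finally show ?thesis by (simp add: power2_eq_iff_nonneg)
qed

text \<open>Gram--Schmidt: the plane through three non-collinear points carries an orthonormal
  frame in which the two edge vectors from A have complex coordinates.\<close>

lemma orthonormal_plane_frame:
  fixes A B C :: "'a::euclidean_space"
  assumes ncol: "\<not> collinear {A, B, C}"
  obtains e1 e2 zb zc where "e1 \<bullet> e1 = 1" "e2 \<bullet> e2 = 1" "e1 \<bullet> e2 = 0"
    "plane_lin e1 e2 zb = B - A" "plane_lin e1 e2 zc = C - A"
proof -
  have BA: "B - A \<noteq> 0" using ncol by auto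
  define e1 where "e1 = (1 / norm (B - A)) *\<^sub>R (B - A)"
  define k where "k = (C - A) \<bullet> e1"
  define g where "g = (C - A) - k *\<^sub>R e1"
  have o1: "e1 \<bullet> e1 = 1" using BA unfolding e1_def
    by (simp add: power2_norm_eq_inner[symmetric] power2_eq_square)
  have g0: "g \<noteq> 0"
  proof
    assume "g = 0"
    hence "C = A + (k / norm (B - A)) *\<^sub>R (B - A)" unfolding g_def e1_def
      by (simp add: algebra_simps)
    hence "collinear {A, B, C}" unfolding collinear_alt
      by (intro exI[of _ A] exI[of _ "B - A"])
        (auto intro: exI[of _ 0] exI[of _ 1] exI[of _ "k / norm (B - A)"])
    thus False using ncol by blast
  qed
  define e2 where "e2 = (1 / norm g) *\<^sub>R g"
  have o2: "e2 \<bullet> e2 = 1" using g0 unfolding e2_def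
    by (simp add: power2_norm_eq_inner[symmetric] power2_eq_square)
  have "e1 \<bullet> g = 0" unfolding g_def k_def using o1 by (simp add: inner_diff_right inner_commute)
  hence o3: "e1 \<bullet> e2 = 0" unfolding e2_def by simp
  have "plane_lin e1 e2 (Complex (norm (B - A)) 0) = B - A"
    using BA unfolding plane_lin_def e1_def by simp
  moreover have "plane_lin e1 e2 (Complex k (norm g)) = C - A"
    using g0 unfolding plane_lin_def e2_def g_def by simp
  ultimately show ?thesis using that o1 o2 o3 by blast
qed

text \<open>An isometric identification of a plane containing A, B, C, D with the complex numbers,
  sending the complex coordinates za, ..., zd to the four points: the objects over which the
  definition of qcr chooses.\<close>

definition plane_chart ::
    "'a::real_inner \<Rightarrow> 'a \<Rightarrow> 'a \<Rightarrow> complex \<Rightarrow> complex \<Rightarrow> complex \<Rightarrow> complex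
      \<Rightarrow> 'a \<Rightarrow> 'a \<Rightarrow> 'a \<Rightarrow> 'a \<Rightarrow> bool" where
  "plane_chart p e1 e2 za zb zc zd A B C D \<longleftrightarrow>
     e1 \<bullet> e1 = 1 \<and> e2 \<bullet> e2 = 1 \<and> e1 \<bullet> e2 = 0
   \<and> plane_emb p e1 e2 za = A \<and> plane_emb p e1 e2 zb = B
   \<and> plane_emb p e1 e2 zc = C \<and> plane_emb p e1 e2 zd = D"

lemma qcr_eqI:
  assumes "\<exists>p e1 e2 za zb zc zd. plane_chart p e1 e2 za zb zc zd A B C D"
    and "\<And>p e1 e2 za zb zc zd. plane_chart p e1 e2 za zb zc zd A B C D
           \<Longrightarrow> cross_ratio za zb zc zd = q"
  shows "qcr A B C D = q"
proof -
  have "qcr A B C D = (SOME w. \<exists>p e1 e2 za zb zc zd.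
          plane_chart p e1 e2 za zb zc zd A B C D \<and> w = cross_ratio za zb zc zd)"
    unfolding qcr_def plane_chart_def by simp
  also have "\<dots> = q" using assms by (intro some_equality) blast+
  finally show ?thesis .
qed

lemma cross_ratio_in_chart:
  fixes A B C D M :: "'a::real_inner"
  assumes chart: "plane_chart p e1 e2 za zb zc zd A B C D"
    and dist: "distinct [A, B, C, D]"
    and MA: "M = A + t *\<^sub>R (C - A)" and MB: "M = B + v *\<^sub>R (D - B)"
    and chords: "t * (1-t) * (norm (C - A))^2 = v * (1-v) * (norm (D - B))^2"
    and v0: "v \<noteq> 0"
  shows "cross_ratio za zb zc zd = of_real (-(1-v) * (norm (B - A))^2 / (v * (norm (D - A))^2))"
proof -
  from chart have o: "e1 \<bullet> e1 = 1" "e2 \<bullet> e2 = 1" "e1 \<bullet> e2 = 0"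
    and hA: "plane_emb p e1 e2 za = A" and hB: "plane_emb p e1 e2 zb = B"
    and hC: "plane_emb p e1 e2 zc = C" and hD: "plane_emb p e1 e2 zd = D"
    unfolding plane_chart_def by blast+
  have diff: "Y - X = plane_lin e1 e2 (y - x)"
    if "plane_emb p e1 e2 y = Y" "plane_emb p e1 e2 x = X" for x y X Y
    using that by (auto simp: plane_emb_lin plane_lin_diff)
  have isom: "cmod z = norm (plane_lin e1 e2 z)" for z using plane_lin_norm[OF o] by simp
  define P where "P = zc - za"
  define Q where "Q = zd - zb"
  text \<open>Both parametrisations of M have the same preimage, which locates zb.\<close>
  have "plane_lin e1 e2 (za + of_real t * P - zb - of_real v * Q)
        = (A + t *\<^sub>R (C - A)) - (B + v *\<^sub>R (D - B))"
    unfolding P_def Q_def plane_lin_diff plane_lin_add plane_lin_scale diff[OF hC hA] diff[OF hD hB]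
    by (simp add: plane_emb_lin algebra_simps flip: hA hB)
  hence "za + of_real t * P - zb - of_real v * Q = 0"
    using MA MB isom by (metis diff_self norm_eq_zero)
  hence zb: "zb = za + of_real t * P - of_real v * Q" by (simp add: algebra_simps)
  have zc: "zc = za + P" by (simp add: P_def)
  have zd: "zd = za + of_real t * P - of_real v * Q + Q" using zb by (simp add: Q_def)
  have BC: "(of_real t - 1) * P - of_real v * Q \<noteq> 0"
  proof
    assume "(of_real t - 1) * P - of_real v * Q = 0"
    hence "zb = zc" by (simp add: zb zc algebra_simps)
    thus False using hB hC dist by auto
  qed
  have DA: "of_real t * P + (1 - of_real v) * Q \<noteq> 0"
  proof
    assume "of_real t * P + (1 - of_real v) * Q = 0"
    hence "zd = za" by (simp add: zd algebra_simps)
    thus False using hD hA dist by auto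
  qed
  have "cmod P = norm (C - A)" "cmod Q = norm (D - B)"
    unfolding P_def Q_def isom diff[OF hC hA] diff[OF hD hB] by simp_all
  hence "cross_ratio za zb zc zd = of_real (-(1-v) * (cmod (of_real t * P - of_real v * Q))^2
                / (v * (cmod (of_real t * P + (1 - of_real v) * Q))^2))"
    unfolding zb zc zd
    by (intro cross_ratio_intersecting_diagonals) (use chords v0 BC DA in auto)
  moreover have "cmod (of_real t * P - of_real v * Q) = norm (B - A)"
    unfolding isom diff[OF hB hA] by (simp add: zb)
  moreover have "cmod (of_real t * P + (1 - of_real v) * Q) = norm (D - A)"
    unfolding isom diff[OF hD hA] by (simp add: zd algebra_simps)
  ultimately show ?thesis by simp
qed

text \<open>A chart exists: A, B, C span a plane, and D lies in it because the diagonals meet.\<close>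

lemma plane_chart_exists:
  fixes A B C D M :: "'a::euclidean_space"
  assumes ncol: "\<not> collinear {A, B, C}"
    and MA: "M = A + t *\<^sub>R (C - A)" and MB: "M = B + v *\<^sub>R (D - B)" and v0: "v \<noteq> 0"
  shows "\<exists>p e1 e2 za zb zc zd. plane_chart p e1 e2 za zb zc zd A B C D"
proof -
  obtain e1 e2 zb zc where o: "e1 \<bullet> e1 = 1" "e2 \<bullet> e2 = 1" "e1 \<bullet> e2 = 0"
    and lb: "plane_lin e1 e2 zb = B - A" and lc: "plane_lin e1 e2 zc = C - A"
    using orthonormal_plane_frame[OF ncol] by blast
  define zd where "zd = of_real (1 - 1/v) * zb + of_real (t/v) * zc"
  have Dv: "v *\<^sub>R (D - B) = (A - B) + t *\<^sub>R (C - A)" using MA MB by (simp add: algebra_simps)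
  have "plane_lin e1 e2 zd = (1 - 1/v) *\<^sub>R (B - A) + (t/v) *\<^sub>R (C - A)"
    unfolding zd_def plane_lin_add plane_lin_scale lb lc ..
  also have "\<dots> = (B - A) + (1/v) *\<^sub>R ((A - B) + t *\<^sub>R (C - A))"
    by (simp add: algebra_simps)
  also have "\<dots> = D - A" unfolding Dv[symmetric] using v0 by simp
  finally have ld: "plane_lin e1 e2 zd = D - A" .
  have "plane_lin e1 e2 0 = 0" by (simp add: plane_lin_def)
  hence "plane_chart A e1 e2 0 zb zc zd A B C D"
    using o lb lc ld by (simp add: plane_chart_def plane_emb_lin)
  thus ?thesis by blast
qed

lemma qcr_intersecting_diagonals:
  fixes A B C D M :: "'a::euclidean_space"
  assumes dist: "distinct [A, B, C, D]" and ncol: "\<not> collinear {A, B, C}"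
    and MA: "M = A + t *\<^sub>R (C - A)" and MB: "M = B + v *\<^sub>R (D - B)"
    and chords: "t * (1-t) * (norm (C - A))^2 = v * (1-v) * (norm (D - B))^2"
    and v0: "v \<noteq> 0"
  shows "qcr A B C D = of_real (-(1-v) * (norm (B - A))^2 / (v * (norm (D - A))^2))"
  using plane_chart_exists[OF ncol MA MB v0] cross_ratio_in_chart[OF _ dist MA MB chords v0]
  by (rule qcr_eqI)

section \<open>Circular quadrilaterals\<close>

lemma affine_hull_2_param:
  fixes A C M :: "'a::real_vector"
  assumes "M \<in> affine hull {A, C}"
  shows "\<exists>t. M = A + t *\<^sub>R (C - A)"
proof -
  from assms obtain a t where M: "M = a *\<^sub>R A + t *\<^sub>R C" and "a + t = 1"
    unfolding affine_hull_2 by blast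
  hence "a = 1 - t" by simp
  with M have "M = A + t *\<^sub>R (C - A)" by (simp add: algebra_simps)
  thus ?thesis by blast
qed

text \<open>Power of a point (step (1)): for a chord AC of a circle with centre z and radius r,
  the point M = A + t (C - A) satisfies t (1 - t) |C - A|^2 = r^2 - |M - z|^2.  The right-hand
  side does not depend on the chord, which gives the intersecting-chords theorem.\<close>

lemma power_of_point:
  fixes A C M z :: "'a::real_inner"
  assumes "dist z A = r" "dist z C = r" "M = A + t *\<^sub>R (C - A)"
  shows "t * (1 - t) * (norm (C - A))^2 = r^2 - (norm (M - z))^2"
proof -
  define x where "x = A - z"
  define y where "y = C - A"
  have hx: "x \<bullet> x = r^2" using assms(1) unfolding x_def
    by (simp add: dist_norm power2_norm_eq_inner[symmetric] norm_minus_commute)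
  have hxy: "(x + y) \<bullet> (x + y) = r^2" using assms(2) unfolding x_def y_def
    by (simp add: dist_norm power2_norm_eq_inner[symmetric] norm_minus_commute)
  have M: "M - z = x + t *\<^sub>R y" using assms(3) by (simp add: x_def y_def algebra_simps)
  have xy: "2 * (x \<bullet> y) = - (y \<bullet> y)" using hx hxy
    by (simp add: inner_add_left inner_add_right inner_commute)
  have "(norm (M - z))^2 = x \<bullet> x + t * (2 * (x \<bullet> y)) + t^2 * (y \<bullet> y)"
    unfolding M power2_norm_eq_inner
    by (simp add: inner_add_left inner_add_right inner_commute power2_eq_square algebra_simps)
  hence "(norm (M - z))^2 = r^2 - t * (y \<bullet> y) + t^2 * (y \<bullet> y)" unfolding xy hx by simp
  moreover have "(norm (C - A))^2 = y \<bullet> y" by (simp add: y_def power2_norm_eq_inner)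
  ultimately show ?thesis by (simp add: power2_eq_square algebra_simps)
qed

lemma qcr_circular_quad:
  fixes A B C D M :: "'a::euclidean_space"
  assumes nd: "nondeg_quad A B C D" and cc: "concircular A B C D"
    and MAC: "M \<in> affine hull {A, C}" and MB: "M = B + v *\<^sub>R (D - B)" and Mn: "M \<noteq> B"
  shows "qcr A B C D = of_real (-(1-v) * (norm (B - A))^2 / (v * (norm (D - A))^2))"
proof -
  from nd have dist: "distinct [A, B, C, D]" and ncol: "\<not> collinear {A, B, C}"
    unfolding nondeg_quad_def by blast+
  from MAC obtain t where MA: "M = A + t *\<^sub>R (C - A)"
    using affine_hull_2_param by blast
  from cc obtain z r where zr: "dist z A = r" "dist z B = r" "dist z C = r" "dist z D = r"
    unfolding concircular_def by blast
  have "t * (1-t) * (norm (C - A))^2 = r^2 - (norm (M - z))^2"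
    by (rule power_of_point[OF zr(1) zr(3) MA])
  moreover have "v * (1-v) * (norm (D - B))^2 = r^2 - (norm (M - z))^2"
    by (rule power_of_point[OF zr(2) zr(4) MB])
  ultimately have chords: "t * (1-t) * (norm (C - A))^2 = v * (1-v) * (norm (D - B))^2"
    by (simp only:)
  have v0: "v \<noteq> 0" using MB Mn by auto
  show ?thesis by (rule qcr_intersecting_diagonals[OF dist ncol MA MB chords v0])
qed

text \<open>Step (3): for M = B + v (D - B) the ratio of directed lengths from M to the endpoints
  of the chord BD is -(1 - v) / v (both sides being 0 when v = 0).\<close>

lemma dlen_ratio_on_segment:
  fixes B D M :: "'a::real_inner"
  assumes DB: "D \<noteq> B" and MB: "M = B + v *\<^sub>R (D - B)"
  shows "dlen ((1 / norm (D - B)) *\<^sub>R (D - B)) M D / dlen ((1 / norm (D - B)) *\<^sub>R (D - B)) M B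
         = - (1 - v) / v"
proof -
  define n where "n = norm (D - B)"
  have n0: "n \<noteq> 0" using DB by (simp add: n_def)
  have nn: "(D - B) \<bullet> (D - B) = n * n" by (simp add: n_def power2_norm_eq_inner[symmetric] power2_eq_square)
  have "D - M = (1 - v) *\<^sub>R (D - B)" "B - M = (- v) *\<^sub>R (D - B)"
    using MB by (simp_all add: algebra_simps)
  hence "dlen ((1 / n) *\<^sub>R (D - B)) M D = (1 - v) * n"
    "dlen ((1 / n) *\<^sub>R (D - B)) M B = (- v) * n"
    using n0 nn by (simp_all add: dlen_def)
  thus ?thesis using n0 unfolding n_def[symmetric] by (simp add: field_split_simps)
qed

lemma label_ratio:
  fixes su si sj v b d ai aj :: real
  assumes sji: "sj / si = - (1 - v) / v" and v0: "v \<noteq> 0"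
    and nz: "su \<noteq> 0" "si \<noteq> 0" "sj \<noteq> 0" "d \<noteq> 0"
    and b: "b = ai * su * si" and d: "d = aj * su * sj"
  shows "ai / aj = -(1-v) * b / (v * d)"
proof -
  have sj: "sj = - (1 - v) / v * si" using sji nz(2) by (simp add: divide_eq_eq)
  show ?thesis using v0 nz unfolding b d sj by (simp add: field_simps)
qed

theorem mainTheorem16:
  fixes f :: "int ^ 'm::finite \<Rightarrow> real ^ 'n::finite"
    and s :: "int ^ 'm \<Rightarrow> real"
    and alpha :: "'m \<Rightarrow> int ^ 'm \<Rightarrow> real"
  assumes iso: "isothermic_net f"
    and s_nz: "\<And>u. s u \<noteq> 0"
    and s_diag1: "\<And>u i j M d. i \<noteq> j \<Longrightarrow>
        M \<in> affine hull {f u, f (u + ev i + ev j)} \<Longrightarrow>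
        M \<in> affine hull {f (u + ev i), f (u + ev j)} \<Longrightarrow>
        norm d = 1 \<Longrightarrow> (\<exists>c. f (u + ev i + ev j) - f u = c *\<^sub>R d) \<Longrightarrow>
        dlen d M (f (u + ev i + ev j)) / dlen d M (f u) = s (u + ev i + ev j) / s u"
    and s_diag2: "\<And>u i j M d. i \<noteq> j \<Longrightarrow>
        M \<in> affine hull {f u, f (u + ev i + ev j)} \<Longrightarrow>
        M \<in> affine hull {f (u + ev i), f (u + ev j)} \<Longrightarrow>
        norm d = 1 \<Longrightarrow> (\<exists>c. f (u + ev j) - f (u + ev i) = c *\<^sub>R d) \<Longrightarrow>
        dlen d M (f (u + ev j)) / dlen d M (f (u + ev i)) = s (u + ev j) / s (u + ev i)"
    and alpha_def: "\<And>u i. (norm (f (u + ev i) - f u))\<^sup>2 = alpha i u * s u * s (u + ev i)"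
    and ij: "i \<noteq> j"
  shows "qcr (f u) (f (u + ev i)) (f (u + ev i + ev j)) (f (u + ev j))
         = complex_of_real (alpha i u / alpha j u)"
proof -
  let ?A = "f u" and ?B = "f (u + ev i)" and ?C = "f (u + ev i + ev j)" and ?D = "f (u + ev j)"
  have nd: "nondeg_quad ?A ?B ?C ?D" and cc: "concircular ?A ?B ?C ?D"
    using iso ij unfolding isothermic_net_def circular_net_def Q_net_def by blast+
  then obtain M where MAC: "M \<in> affine hull {?A, ?C}" and MBD: "M \<in> affine hull {?B, ?D}"
    and Mn: "M \<notin> {?A, ?B, ?C, ?D}" and DB: "?D \<noteq> ?B" and DA: "?D \<noteq> ?A"
    unfolding nondeg_quad_def by auto
  from MBD obtain v where MB: "M = ?B + v *\<^sub>R (?D - ?B)"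
    using affine_hull_2_param by blast
  have q: "qcr ?A ?B ?C ?D = of_real (-(1-v) * (norm (?B - ?A))^2 / (v * (norm (?D - ?A))^2))"
    using qcr_circular_quad[OF nd cc MAC MB] Mn by blast
  define d where "d = (1 / norm (?D - ?B)) *\<^sub>R (?D - ?B)"
  have "norm d = 1" "?D - ?B = norm (?D - ?B) *\<^sub>R d" using DB by (simp_all add: d_def)
  hence "s (u + ev j) / s (u + ev i) = dlen d M ?D / dlen d M ?B"
    using s_diag2[OF ij MAC MBD] by metis
  also have "\<dots> = - (1 - v) / v" unfolding d_def by (rule dlen_ratio_on_segment[OF DB MB])
  finally have "s (u + ev j) / s (u + ev i) = - (1 - v) / v" .
  moreover have "v \<noteq> 0" using Mn MB by auto
  ultimately have "alpha i u / alpha j u = -(1-v) * (norm (?B - ?A))^2 / (v * (norm (?D - ?A))^2)"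
    using s_nz DA alpha_def[of u i, symmetric] alpha_def[of u j, symmetric]
    by (intro label_ratio[where su = "s u" and si = "s (u + ev i)" and sj = "s (u + ev j)"]) auto
  thus ?thesis using q by simp
qed

end
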